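(* Let $G$ be a finite simple graph such that the cut polytope $\mathrm{Cut}(G)$ is compressed, and let $\Sigma$ be a special simplex in $\mathrm{Cut}(G)$. If $G$ has a triangle, then $\dim\Sigma=3$.
   Context: $G$ is a finite graph without loops or multiple edges on vertex set $[n]$ with edge set $\{e_1,\dots,e_m\}$. For $S\subset[n]$, $\delta_G(S)\in\{0,1\}^m$ has coordinate $1$ at edge $\{a,b\}$ iff $|S\cap\{a,b\}|=1$; the cut polytope $\mathrm{Cut}(G)\subset\mathbb{R}^m$ is the convex hull of all $\delta_G(S)$. An integral polytope is compressed if all of its reverse lexicographic (pulling) triangulations, using its lattice points, are unimodular. A $d$-simplex $\Sigma$ each of whose vertices is a vertex of a polytope $P$ is a special simplex in $P$ if each facet of $P$ contains exactly $d$ of the vertices of $\Sigma$. A triangle is a cycle of length $3$. *)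

theory Defs
  imports "HOL-Analysis.Analysis"
begin

(* A finite simple graph: vertices are the elements of the finite type 'v,
   edges are the elements of the finite type 'e, and ends e is the set of the
   two endpoints of edge e.  Injectivity of ends = no multiple edges;
   card 2 = no loops. *)
definition simple_graph :: "('e::finite \<Rightarrow> 'v::finite set) \<Rightarrow> bool" where
  "simple_graph ends \<longleftrightarrow> inj ends \<and> (\<forall>e. card (ends e) = 2)"

definition has_triangle :: "('e \<Rightarrow> 'v set) \<Rightarrow> bool" where
  "has_triangle ends \<longleftrightarrow> (\<exists>a b c. a \<noteq> b \<and> b \<noteq> c \<and> a \<noteq> c \<and>
      {a, b} \<in> range ends \<and> {b, c} \<in> range ends \<and> {a, c} \<in> range ends)"

definition cut_vector :: "('e::finite \<Rightarrow> 'v set) \<Rightarrow> 'v set \<Rightarrow> real^'e" where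
  "cut_vector ends S = (\<chi> e. if card (S \<inter> ends e) = 1 then 1 else 0)"

definition cut_polytope :: "('e::finite \<Rightarrow> 'v set) \<Rightarrow> (real^'e) set" where
  "cut_polytope ends = convex hull {cut_vector ends S | S. True}"

definition integral_point :: "real^'e::finite \<Rightarrow> bool" where
  "integral_point x \<longleftrightarrow> (\<forall>i. x $ i \<in> \<int>)"

definition lattice_points :: "(real^'e::finite) set \<Rightarrow> (real^'e) set" where
  "lattice_points P = {x \<in> P. integral_point x}"

definition integral_polytope :: "(real^'e::finite) set \<Rightarrow> bool" where
  "integral_polytope P \<longleftrightarrow> polytope P \<and> (\<forall>v. v extreme_point_of P \<longrightarrow> integral_point v)"

definition int_affine_span :: "(real^'e::finite) set \<Rightarrow> (real^'e) set" where
  "int_affine_span S = {y. \<exists>a. (\<forall>c\<in>S. a c \<in> \<int>) \<and> sum a S = 1 \<and> y = (\<Sum>c\<in>S. a c *\<^sub>R c)}"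

(* Pulling (reverse lexicographic) triangulation of a face Q of P with respect to a
   total order on the lattice points of P, given as a list ord (earlier = pulled first).
   Simplices are represented by their vertex sets. *)
inductive pulling :: "(real^'e::finite) list \<Rightarrow> (real^'e) set \<Rightarrow> (real^'e) set set \<Rightarrow> bool"
  for ord where
  point: "Q = {v} \<Longrightarrow> pulling ord Q {{v}}"
| pull: "\<lbrakk> aff_dim Q > 0; v \<in> Q; v = hd (filter (\<lambda>x. x \<in> Q) ord);
          \<forall>F. F facet_of Q \<and> v \<notin> F \<longrightarrow> pulling ord F (TF F) \<rbrakk>
         \<Longrightarrow> pulling ord Q (\<Union>F\<in>{F. F facet_of Q \<and> v \<notin> F}. insert v ` TF F)"

definition unimodular_in :: "(real^'e::finite) set \<Rightarrow> (real^'e) set \<Rightarrow> bool" where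
  "unimodular_in P C \<longleftrightarrow> \<not> affine_dependent C \<and> aff_dim (convex hull C) = aff_dim P \<and>
     int_affine_span (lattice_points P) \<subseteq> int_affine_span C"

definition compressed :: "(real^'e::finite) set \<Rightarrow> bool" where
  "compressed P \<longleftrightarrow> integral_polytope P \<and>
     (\<forall>ord T. distinct ord \<and> set ord = lattice_points P \<and> pulling ord P T \<longrightarrow>
        (\<forall>C\<in>T. unimodular_in P C))"

definition special_simplex :: "(real^'e::finite) set \<Rightarrow> int \<Rightarrow> (real^'e) set \<Rightarrow> bool" where
  "special_simplex P d \<Sigma> \<longleftrightarrow> (\<exists>C. \<not> affine_dependent C \<and> int (card C) = d + 1 \<and> \<Sigma> = convex hull C \<and>
      (\<forall>v\<in>C. v extreme_point_of P) \<and>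
      (\<forall>F. F facet_of P \<longrightarrow> int (card (F \<inter> C)) = d))"

end

theory Submission imports Defs begin

text \<open>
  For a triangle \<open>abc\<close> of \<open>G\<close>, the triangle inequality \<open>x\<^sub>a\<^sub>b + x\<^sub>b\<^sub>c + x\<^sub>a\<^sub>c \<le> 2\<close> and its
  three switchings by \<open>{a}\<close>, \<open>{b}\<close>, \<open>{c}\<close> define facets of \<open>Cut(G)\<close>, and every cut vector
  \<open>\<delta>(S)\<close> lies on exactly three of these four facets: it misses the one whose switching set
  puts \<open>a\<close>, \<open>b\<close>, \<open>c\<close> on the same side. A special simplex has its vertices among the cut
  vectors, and each facet misses exactly one of them. Counting the incidences between the
  vertices and the four facets in both ways shows that the simplex has exactly four vertices.
\<close>

lemma affine_add_diff:
  assumes "affine H" "x \<in> H" "y \<in> H" "z \<in> H"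
  shows "x + (y - z) \<in> H"
  using mem_affine_3_minus[OF assms, of 1] by simp

lemma facet_of_convex_hull_hyperplane:
  fixes V :: "'a::euclidean_space set"
  assumes le: "\<And>v. v \<in> V \<Longrightarrow> \<alpha> \<bullet> v \<le> \<beta>"
    and w: "w \<in> V" "\<alpha> \<bullet> w < \<beta>"
    and touch: "\<exists>v\<in>V. \<alpha> \<bullet> v = \<beta>"
    and spans: "V \<subseteq> affine hull (insert w {v\<in>V. \<alpha> \<bullet> v = \<beta>})"
  shows "(convex hull V \<inter> {x. \<alpha> \<bullet> x = \<beta>}) facet_of convex hull V"
proof -
  define F where "F = convex hull V \<inter> {x. \<alpha> \<bullet> x = \<beta>}"
  have "convex hull V \<subseteq> {x. \<alpha> \<bullet> x \<le> \<beta>}"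
    by (rule hull_minimal) (auto simp: le convex_halfspace_le)
  then have face: "F face_of convex hull V"
    unfolding F_def by (intro face_of_Int_supporting_hyperplane_le) auto
  have "F \<noteq> {}"
    using touch hull_subset[of V convex] unfolding F_def by blast
  moreover have "F \<noteq> convex hull V"
    using w hull_subset[of V convex] unfolding F_def by force
  then have "aff_dim F < aff_dim (convex hull V)"
    by (intro face_of_aff_dim_lt[OF convex_convex_hull face])
  moreover have "aff_dim (convex hull V) \<le> aff_dim F + 1"
  proof -
    have "{v\<in>V. \<alpha> \<bullet> v = \<beta>} \<subseteq> F"
      using hull_subset[of V convex] unfolding F_def by blast
    then have "V \<subseteq> affine hull (insert w F)"
      using spans hull_mono[of "insert w {v\<in>V. \<alpha> \<bullet> v = \<beta>}" "insert w F" affine] by blast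
    then have "convex hull V \<subseteq> affine hull (insert w F)"
      by (intro hull_minimal) (auto intro: affine_imp_convex)
    then have "aff_dim (convex hull V) \<le> aff_dim (insert w F)"
      by (metis aff_dim_subset aff_dim_affine_hull)
    then show ?thesis
      using aff_dim_insert[of w F] by (auto split: if_splits)
  qed
  ultimately show ?thesis
    using face unfolding facet_of_def F_def by simp
qed

lemma special_simplex_misses_one_vertex:
  assumes "\<not> affine_dependent C" "int (card C) = d + 1" "F facet_of P"
    and "\<forall>F. F facet_of P \<longrightarrow> int (card (F \<inter> C)) = d"
  shows "card {c\<in>C. c \<notin> F} = 1"
proof -
  have "finite C"
    using assms(1) by (rule aff_independent_finite)
  then have "card C = card (F \<inter> C) + card {c\<in>C. c \<notin> F}"
    by (subst card_Un_disjoint[symmetric]) (auto intro: arg_cong[where f = card])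
  then show ?thesis
    using assms(2-4) by force
qed

lemma aff_dim_special_simplex:
  assumes special: "special_simplex P d \<Sigma>" and "finite J"
    and facets: "\<And>j. j \<in> J \<Longrightarrow> F j facet_of P"
    and misses_one: "\<And>v. v extreme_point_of P \<Longrightarrow> card {j\<in>J. v \<notin> F j} = 1"
  shows "aff_dim \<Sigma> = int (card J) - 1"
proof -
  obtain C where indep: "\<not> affine_dependent C" and card_C: "int (card C) = d + 1"
    and \<Sigma>: "\<Sigma> = convex hull C" and extreme: "\<forall>v\<in>C. v extreme_point_of P"
    and facet_card: "\<forall>F. F facet_of P \<longrightarrow> int (card (F \<inter> C)) = d"
    using special unfolding special_simplex_def by blast
  have "finite C"
    using indep by (rule aff_independent_finite)
  have "card C = (\<Sum>c\<in>C. card {j\<in>J. c \<notin> F j})"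
    using extreme misses_one by simp
  also have "\<dots> = card J"
    using sum_multicount[OF \<open>finite C\<close> \<open>finite J\<close>, of "\<lambda>c j. c \<notin> F j" 1]
      special_simplex_misses_one_vertex[OF indep card_C facets facet_card] by simp
  finally show ?thesis
    using aff_dim_affine_independent[OF indep] by (simp add: \<Sigma> aff_dim_convex_hull)
qed

lemma cut_vector_edge:
  assumes "ends e = {x, y}" "x \<noteq> y"
  shows "cut_vector ends S $ e = (if x \<in> S \<longleftrightarrow> y \<in> S then 0 else 1)"
  using assms unfolding cut_vector_def
  by (cases "x \<in> S"; cases "y \<in> S") (auto simp: Int_insert_right)

lemma simple_graph_obtain_ends:
  assumes "simple_graph ends"
  obtains x y where "ends e = {x, y}" "x \<noteq> y"
  using assms unfolding simple_graph_def by (meson card_2_iff)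

lemma cut_vector_sym_diff:
  assumes "simple_graph ends"
  shows "cut_vector ends (sym_diff S A) $ e =
    cut_vector ends S $ e + cut_vector ends A $ e - 2 * cut_vector ends S $ e * cut_vector ends A $ e"
proof -
  obtain x y where "ends e = {x, y}" "x \<noteq> y"
    using assms by (rule simple_graph_obtain_ends)
  then show ?thesis
    by (simp add: cut_vector_edge) blast
qed

text \<open>Both sides vanish off the edges \<open>{u, v}\<close> and equal \<open>\<plusminus>2\<close> on them, the sign depending
  only on whether the set separates \<open>u\<close> from \<open>v\<close>.\<close>

lemma cut_vector_double_switch:
  assumes "simple_graph ends" "u \<noteq> v"
    and "(u \<in> S \<longleftrightarrow> v \<in> S) \<longleftrightarrow> (u \<in> T \<longleftrightarrow> v \<in> T)"
  shows "cut_vector ends S - cut_vector ends (sym_diff S {u}) - cut_vector ends (sym_diff S {v})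
      + cut_vector ends (sym_diff S {u, v})
    = cut_vector ends T - cut_vector ends (sym_diff T {u}) - cut_vector ends (sym_diff T {v})
      + cut_vector ends (sym_diff T {u, v})"
proof (rule vec_eq_iff[THEN iffD2], rule allI)
  fix e
  obtain x y where "ends e = {x, y}" "x \<noteq> y"
    using assms(1) by (rule simple_graph_obtain_ends)
  with assms(2,3) show "(cut_vector ends S - cut_vector ends (sym_diff S {u})
      - cut_vector ends (sym_diff S {v}) + cut_vector ends (sym_diff S {u, v})) $ e =
    (cut_vector ends T - cut_vector ends (sym_diff T {u}) - cut_vector ends (sym_diff T {v})
      + cut_vector ends (sym_diff T {u, v})) $ e"
    by (simp add: cut_vector_edge) blast
qed

locale cut_triangle =
  fixes ends :: "'e::finite \<Rightarrow> 'v::finite set" and a b c :: 'v and eab ebc eac :: 'e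
  assumes simple: "simple_graph ends"
    and distinct: "a \<noteq> b" "b \<noteq> c" "a \<noteq> c"
    and ends: "ends eab = {a, b}" "ends ebc = {b, c}" "ends eac = {a, c}"
begin

lemma edges_distinct: "eab \<noteq> ebc" "eab \<noteq> eac" "ebc \<noteq> eac"
  using ends distinct by (auto simp: doubleton_eq_iff)

definition triangle_edges :: "'e set" where
  "triangle_edges = {eab, ebc, eac}"

definition uncut :: "'v set \<Rightarrow> bool" where
  "uncut T \<longleftrightarrow> (a \<in> T \<longleftrightarrow> b \<in> T) \<and> (b \<in> T \<longleftrightarrow> c \<in> T)"

lemma sum_triangle_cut_vector:
  "(\<Sum>e\<in>triangle_edges. cut_vector ends T $ e) = (if uncut T then 0 else 2)"
  using edges_distinct distinct
  by (simp add: triangle_edges_def uncut_def ends cut_vector_edge)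

text \<open>The triangle inequality \<open>x\<^sub>a\<^sub>b + x\<^sub>b\<^sub>c + x\<^sub>a\<^sub>c \<le> 2\<close> switched by \<open>A\<close>: the coordinates of the
  edges cut by \<open>A\<close> are replaced by \<open>1 - x\<^sub>e\<close>, which maps \<open>\<delta>(S)\<close> to \<open>\<delta>(S \<triangle> A)\<close>.\<close>

definition switched_normal :: "'v set \<Rightarrow> real^'e" where
  "switched_normal A = (\<Sum>e\<in>triangle_edges. axis e (1 - 2 * cut_vector ends A $ e))"

definition switched_bound :: "'v set \<Rightarrow> real" where
  "switched_bound A = 2 - (\<Sum>e\<in>triangle_edges. cut_vector ends A $ e)"

definition switched_facet :: "'v set \<Rightarrow> (real^'e) set" where
  "switched_facet A = cut_polytope ends \<inter> {x. switched_normal A \<bullet> x = switched_bound A}"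

lemma switched_slack:
  "switched_bound A - switched_normal A \<bullet> cut_vector ends S = (if uncut (sym_diff S A) then 2 else 0)"
proof -
  have "switched_normal A \<bullet> cut_vector ends S
      = (\<Sum>e\<in>triangle_edges. (1 - 2 * cut_vector ends A $ e) * cut_vector ends S $ e)"
    by (simp add: switched_normal_def inner_sum_left inner_axis' mult.commute)
  moreover have "(\<Sum>e\<in>triangle_edges. cut_vector ends (sym_diff S A) $ e)
      = (\<Sum>e\<in>triangle_edges. (1 - 2 * cut_vector ends A $ e) * cut_vector ends S $ e)
        + (\<Sum>e\<in>triangle_edges. cut_vector ends A $ e)"
    unfolding sum.distrib[symmetric] cut_vector_sym_diff[OF simple] by (simp add: algebra_simps)
  ultimately show ?thesis
    using sum_triangle_cut_vector[of "sym_diff S A"]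
    by (cases "uncut (sym_diff S A)") (simp_all add: switched_bound_def)
qed

lemma cut_vector_in_switched_facet_iff:
  "cut_vector ends S \<in> switched_facet A \<longleftrightarrow> \<not> uncut (sym_diff S A)"
  using switched_slack[of A S] hull_subset[of "{cut_vector ends S |S. True}" convex]
  by (auto simp: switched_facet_def cut_polytope_def split: if_splits)

lemma uncut_switch_pair:
  assumes "uncut T" "U \<in> {{a}, {b}, {a, b}}"
  shows "\<not> uncut (sym_diff T U)"
  using assms distinct by (auto simp: uncut_def)

text \<open>A cut vector off the facet is an affine combination of \<open>\<delta>(A)\<close> and of cut vectors on
  it, by the double switching identity at the edge \<open>ab\<close>.\<close>

lemma switched_facet_facet_of: "switched_facet A facet_of cut_polytope ends"
proof -
  define V where "V = {cut_vector ends S | S. True}"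
  define H where "H = affine hull (insert (cut_vector ends A)
    {v\<in>V. switched_normal A \<bullet> v = switched_bound A})"
  have on_facet: "switched_normal A \<bullet> cut_vector ends S = switched_bound A \<longleftrightarrow> \<not> uncut (sym_diff S A)"
    for S
    using switched_slack[of A S] by (auto split: if_splits)
  have in_H: "cut_vector ends S \<in> H" if "\<not> uncut (sym_diff S A) \<or> S = A" for S
    using that on_facet[of S] unfolding H_def V_def by (auto intro: hull_inc)
  have switched_in_H: "cut_vector ends (sym_diff X U) \<in> H"
    if "uncut (sym_diff X A)" "U \<in> {{a}, {b}, {a, b}}" for X U
  proof (rule in_H)
    have "sym_diff (sym_diff X U) A = sym_diff (sym_diff X A) U"
      by blast
    then show "\<not> uncut (sym_diff (sym_diff X U) A) \<or> sym_diff X U = A"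
      using uncut_switch_pair[OF that] by simp
  qed
  have "V \<subseteq> H"
  proof
    fix v assume "v \<in> V"
    then obtain S where v: "v = cut_vector ends S"
      unfolding V_def by blast
    show "v \<in> H"
    proof (cases "uncut (sym_diff S A)")
      case False
      then show ?thesis
        using in_H v by blast
    next
      case True
      then have "(a \<in> S \<longleftrightarrow> b \<in> S) \<longleftrightarrow> (a \<in> A \<longleftrightarrow> b \<in> A)"
        unfolding uncut_def by blast
      from cut_vector_double_switch[OF simple distinct(1) this]
      have v_eq: "v = cut_vector ends (sym_diff S {a})
          + (cut_vector ends (sym_diff S {b}) - cut_vector ends (sym_diff S {a, b}))
          + (cut_vector ends A - cut_vector ends (sym_diff A {a}))
          + (cut_vector ends (sym_diff A {a, b}) - cut_vector ends (sym_diff A {b}))"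
        unfolding v by (simp add: algebra_simps)
      have "affine H" "uncut (sym_diff A A)"
        by (simp_all add: H_def uncut_def)
      then show ?thesis
        unfolding v_eq by (intro affine_add_diff) (simp_all add: True switched_in_H in_H)
    qed
  qed
  moreover have "switched_normal A \<bullet> v \<le> switched_bound A" if "v \<in> V" for v
  proof -
    obtain S where "v = cut_vector ends S"
      using \<open>v \<in> V\<close> unfolding V_def by blast
    then show ?thesis
      using switched_slack[of A S] by (simp split: if_splits)
  qed
  moreover have "switched_normal A \<bullet> cut_vector ends A < switched_bound A"
    using switched_slack[of A A] by (simp add: uncut_def)
  moreover have "switched_normal A \<bullet> cut_vector ends (sym_diff A {a}) = switched_bound A"
  proof -
    have "sym_diff (sym_diff A {a}) A = {a}"
      by blast
    then show ?thesis
      using on_facet distinct by (simp add: uncut_def)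
  qed
  moreover have "cut_vector ends A \<in> V" "cut_vector ends (sym_diff A {a}) \<in> V"
    unfolding V_def by blast+
  ultimately show ?thesis
    unfolding switched_facet_def cut_polytope_def V_def[symmetric] H_def
    by (intro facet_of_convex_hull_hyperplane) auto
qed

lemma card_switched_facets_missed:
  "card {A\<in>{{}, {a}, {b}, {c}}. cut_vector ends S \<notin> switched_facet A} = 1"
proof -
  have "card {A\<in>{{}, {a}, {b}, {c}}. uncut (sym_diff S A)}
      = (\<Sum>A\<in>{{}, {a}, {b}, {c}}. if uncut (sym_diff S A) then 1 else 0)"
    by (simp add: sum.If_cases Int_def)
  also have "\<dots> = 1"
    using distinct by (simp add: uncut_def)
  finally show ?thesis
    by (simp add: cut_vector_in_switched_facet_iff)
qed

lemma card_switching_sets: "card {{}, {a}, {b}, {c}} = (4::nat)"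
  using distinct by auto

end

theorem lemma3p3:
  fixes ends :: "'e::finite \<Rightarrow> 'v::finite set" and \<Sigma> :: "(real^'e) set" and d :: int
  assumes "simple_graph ends"
    and "compressed (cut_polytope ends)"
    and "special_simplex (cut_polytope ends) d \<Sigma>"
    and "has_triangle ends"
  shows "aff_dim \<Sigma> = 3"
proof -
  obtain a b c where abc: "a \<noteq> b" "b \<noteq> c" "a \<noteq> c"
    and "{a, b} \<in> range ends" "{b, c} \<in> range ends" "{a, c} \<in> range ends"
    using assms(4) unfolding has_triangle_def by blast
  then obtain eab ebc eac where "ends eab = {a, b}" "ends ebc = {b, c}" "ends eac = {a, c}"
    by (metis rangeE)
  then interpret cut_triangle ends a b c eab ebc eac
    using abc assms(1) by unfold_locales
  have "aff_dim \<Sigma> = int (card {{}, {a}, {b}, {c}}) - 1"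
  proof (rule aff_dim_special_simplex[OF assms(3), where F = switched_facet])
    fix v assume "v extreme_point_of cut_polytope ends"
    then obtain S where "v = cut_vector ends S"
      unfolding cut_polytope_def using extreme_point_of_convex_hull by blast
    then show "card {A\<in>{{}, {a}, {b}, {c}}. v \<notin> switched_facet A} = 1"
      by (simp only: card_switched_facets_missed)
  qed (simp_all add: switched_facet_facet_of)
  then show ?thesis
    by (simp add: card_switching_sets)
qed

end
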